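(* Let $(\Omega,\mathcal H,\mathbb E)$ be a sublinear expectation space with $\mathbb E[\cdot]=\sup_{\theta\in\Theta}E_{P_\theta}[\cdot]$, where $\{P_\theta\}_{\theta\in\Theta}$ is a countably-dimensional weakly compact family of probability measures on $(\Omega,\sigma(\mathcal H))$. Let $X_1,X_2,\dots$ be a discrete IID source sequence on this space with values in a finite alphabet $\mathcal X$, let $p_\theta(x)=P_\theta(X_1=x)$, and let $d:\mathcal X\times\hat{\mathcal X}\to[0,\infty)$ be a distortion measure with $\hat{\mathcal X}$ finite. Then for any $D$, any $R_s>\hat R^I(D)$ and any $\epsilon>0$ there exist a sufficiently large $n$ and a $(\|\mathcal W\|,n,f_n,g_n)$ nonlinear source code with coding rate $R_s$ such that, with $\boldsymbol Q$ the corresponding transition probability matrix from $\mathcal X^n$ to $\hat{\mathcal X}^n$ (namely $\hat{\boldsymbol X}^n=g_n(f_n(\boldsymbol X^n))$), $$\mathcal E_{\boldsymbol Q}\big[d(\boldsymbol X^n,\hat{\boldsymbol X}^n)\big]=\inf_{\theta\in\Theta}E_{P_\theta}\big[d(\boldsymbol X^n,g_n(f_n(\boldsymbol X^n)))\big]\le D+\epsilon.$$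
   Context: Sublinear expectation space: $\mathcal H$ a linear space of real functions on $\Omega$ (containing constants, closed under $|\cdot|$ and bounded Borel functions of finitely many elements), $\mathbb E$ monotone, constant preserving, subadditive, positively homogeneous. Countably-dimensional weakly compact: for any bounded $Y_1,Y_2,\dots\in\mathcal H$ and any sequence $\{P_n\}\subset\{P_\theta\}$ there are a subsequence $\{n_k\}$ and $P\in\{P_\theta\}$ with $\lim_kP_{n_k}(\phi(Y_1,\dots,Y_d))=P(\phi(Y_1,\dots,Y_d))$ for every $d$ and bounded continuous $\phi$. IID: $\mathbb E[\phi(X_i)]=\mathbb E[\phi(X_j)]$ for all $i,j$ and bounded Borel $\phi$, and $\mathbb E[\phi(X_1,\dots,X_n)]=\mathbb E\big[\mathbb E[\phi(\boldsymbol x,X_n)]_{\boldsymbol x=(X_1,\dots,X_{n-1})}\big]$ for all $n$ and bounded Borel $\phi$. Code: $f_n:\mathcal X^n\to\mathcal W$, $g_n:\mathcal W\to\hat{\mathcal X}^n$, rate $\frac{\log\|\mathcal W\|}{n}$. Sequence distortion $d(\boldsymbol x^n,\hat{\boldsymbol x}^n)=\frac1n\sum_{i=1}^n d(x_i,\hat x_i)$. Rate distortion function: for a transition matrix $\boldsymbol Q=(q(\hat x|x))$ from $\mathcal X$ to $\hat{\mathcal X}$ put $\mathbb E_{\boldsymbol Q}[d(X,\hat X)]=\sup_\theta\sum_{x,\hat x}p_\theta(x)q(\hat x|x)d(x,\hat x)$ and $\overline I[\{p_\theta\};\boldsymbol Q]=\sup_\theta\sum_{x,\hat x}p_\theta(x)q(\hat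 x|x)\log\frac{q(\hat x|x)}{\sum_{x'}q(\hat x|x')p_\theta(x')}$; then $\hat R^I(D)=\inf\{\overline I[\{p_\theta\};\boldsymbol Q]:\mathbb E_{\boldsymbol Q}[d(X,\hat X)]\le D\}$. *)

theory Defs
  imports "HOL-Probability.Probability"
begin

definition sub_exp :: "'t set \<Rightarrow> ('t \<Rightarrow> 'o measure) \<Rightarrow> ('o \<Rightarrow> real) \<Rightarrow> real" where
  "sub_exp \<Theta> P f = (SUP \<theta>\<in>\<Theta>. \<integral>\<omega>. f \<omega> \<partial>P \<theta>)"

definition low_exp :: "'t set \<Rightarrow> ('t \<Rightarrow> 'o measure) \<Rightarrow> ('o \<Rightarrow> real) \<Rightarrow> real" where
  "low_exp \<Theta> P f = (INF \<theta>\<in>\<Theta>. \<integral>\<omega>. f \<omega> \<partial>P \<theta>)"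

text \<open>Finitely many elements Y 0..Y (d-1) of H packed as a point of the product space
  (coordinates \<open>\<ge> d\<close> set to 0); functions of finitely many elements are then
  functions \<open>(nat \<Rightarrow> real) \<Rightarrow> real\<close> applied to this packed vector.\<close>

definition pack :: "nat \<Rightarrow> (nat \<Rightarrow> 'o \<Rightarrow> real) \<Rightarrow> 'o \<Rightarrow> (nat \<Rightarrow> real)" where
  "pack d Y \<omega> = (\<lambda>i. if i < d then Y i \<omega> else 0)"

definition sublinear_expectation_space ::
  "'o measure \<Rightarrow> ('o \<Rightarrow> real) set \<Rightarrow> 't set \<Rightarrow> ('t \<Rightarrow> 'o measure) \<Rightarrow> bool" where
  "sublinear_expectation_space M H \<Theta> P \<longleftrightarrow>
     \<Theta> \<noteq> {} \<and>
     (\<forall>c. (\<lambda>_. c) \<in> H) \<and>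
     (\<forall>Y\<in>H. \<forall>Z\<in>H. (\<lambda>\<omega>. Y \<omega> + Z \<omega>) \<in> H) \<and>
     (\<forall>Y\<in>H. \<forall>c. (\<lambda>\<omega>. c * Y \<omega>) \<in> H) \<and>
     (\<forall>Y\<in>H. (\<lambda>\<omega>. \<bar>Y \<omega>\<bar>) \<in> H) \<and>
     (\<forall>d Y (\<phi>::(nat \<Rightarrow> real) \<Rightarrow> real). (\<forall>i<d. Y i \<in> H) \<longrightarrow>
         \<phi> \<in> borel_measurable borel \<longrightarrow> bounded (range \<phi>) \<longrightarrow>
         (\<lambda>\<omega>. \<phi> (pack d Y \<omega>)) \<in> H) \<and>
     H \<subseteq> borel_measurable M \<and>
     sets M = sigma_sets (space M) {Y -` B \<inter> space M | Y B. Y \<in> H \<and> B \<in> sets borel} \<and>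
     (\<forall>\<theta>\<in>\<Theta>. prob_space (P \<theta>) \<and> sets (P \<theta>) = sets M \<and> space (P \<theta>) = space M) \<and>
     (\<forall>Y\<in>H. (\<forall>\<theta>\<in>\<Theta>. integrable (P \<theta>) Y) \<and> bdd_above ((\<lambda>\<theta>. \<integral>\<omega>. Y \<omega> \<partial>P \<theta>) ` \<Theta>))"

definition countably_dim_weakly_compact ::
  "('o \<Rightarrow> real) set \<Rightarrow> 't set \<Rightarrow> ('t \<Rightarrow> 'o measure) \<Rightarrow> bool" where
  "countably_dim_weakly_compact H \<Theta> P \<longleftrightarrow>
     (\<forall>(Y::nat \<Rightarrow> 'o \<Rightarrow> real) (ts::nat \<Rightarrow> 't).
        (\<forall>i. Y i \<in> H \<and> bounded (range (Y i))) \<longrightarrow> (\<forall>n. ts n \<in> \<Theta>) \<longrightarrow>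
        (\<exists>r \<theta>. strict_mono r \<and> \<theta> \<in> \<Theta> \<and>
           (\<forall>d (\<phi>::(nat \<Rightarrow> real) \<Rightarrow> real). continuous_on UNIV \<phi> \<longrightarrow> bounded (range \<phi>) \<longrightarrow>
              (\<lambda>k. \<integral>\<omega>. \<phi> (pack d Y \<omega>) \<partial>P (ts (r k)))
                \<longlonglongrightarrow> (\<integral>\<omega>. \<phi> (pack d Y \<omega>) \<partial>P \<theta>))))"

text \<open>The source vector (X_1,...,X_n); the paper's X_i is X (i-1) here.\<close>

definition Xvec :: "(nat \<Rightarrow> 'o \<Rightarrow> 'x) \<Rightarrow> nat \<Rightarrow> 'o \<Rightarrow> 'x list" where
  "Xvec X n \<omega> = map (\<lambda>i. X i \<omega>) [0..<n]"

text \<open>IID under the sublinear expectation (finite alphabet: every function is bounded Borel).\<close>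

definition iid_source :: "'t set \<Rightarrow> ('t \<Rightarrow> 'o measure) \<Rightarrow> (nat \<Rightarrow> 'o \<Rightarrow> 'x::finite) \<Rightarrow> bool" where
  "iid_source \<Theta> P X \<longleftrightarrow>
     (\<forall>i j (\<phi>::'x \<Rightarrow> real). sub_exp \<Theta> P (\<lambda>\<omega>. \<phi> (X i \<omega>)) = sub_exp \<Theta> P (\<lambda>\<omega>. \<phi> (X j \<omega>))) \<and>
     (\<forall>n (\<phi>::'x list \<Rightarrow> real). n \<ge> 1 \<longrightarrow>
        sub_exp \<Theta> P (\<lambda>\<omega>. \<phi> (Xvec X n \<omega>)) =
        sub_exp \<Theta> P (\<lambda>\<omega>. sub_exp \<Theta> P (\<lambda>\<omega>'. \<phi> (Xvec X (n - 1) \<omega> @ [X (n - 1) \<omega>']))))"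

definition pdist :: "('t \<Rightarrow> 'o measure) \<Rightarrow> (nat \<Rightarrow> 'o \<Rightarrow> 'x) \<Rightarrow> 't \<Rightarrow> 'x \<Rightarrow> real" where
  "pdist P X \<theta> x = measure (P \<theta>) {\<omega> \<in> space (P \<theta>). X 0 \<omega> = x}"

definition stochastic :: "('x::finite \<Rightarrow> 'y::finite \<Rightarrow> real) \<Rightarrow> bool" where
  "stochastic Q \<longleftrightarrow> (\<forall>x y. Q x y \<ge> 0) \<and> (\<forall>x. (\<Sum>y\<in>UNIV. Q x y) = 1)"

definition exp_dist_Q :: "'t set \<Rightarrow> ('t \<Rightarrow> 'x::finite \<Rightarrow> real) \<Rightarrow> ('x \<Rightarrow> 'y::finite \<Rightarrow> real)
    \<Rightarrow> ('x \<Rightarrow> 'y \<Rightarrow> real) \<Rightarrow> real" where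
  "exp_dist_Q \<Theta> p Q d = (SUP \<theta>\<in>\<Theta>. \<Sum>x\<in>UNIV. \<Sum>y\<in>UNIV. p \<theta> x * Q x y * d x y)"

definition mutual_info_bar :: "'t set \<Rightarrow> ('t \<Rightarrow> 'x::finite \<Rightarrow> real) \<Rightarrow> ('x \<Rightarrow> 'y::finite \<Rightarrow> real) \<Rightarrow> real" where
  "mutual_info_bar \<Theta> p Q = (SUP \<theta>\<in>\<Theta>. \<Sum>x\<in>UNIV. \<Sum>y\<in>UNIV.
      p \<theta> x * Q x y * ln (Q x y / (\<Sum>x'\<in>UNIV. Q x' y * p \<theta> x')))"

text \<open>Rate distortion function; infimum of the empty set is +infinity.\<close>

definition rate_distortion :: "'t set \<Rightarrow> ('t \<Rightarrow> 'x::finite \<Rightarrow> real) \<Rightarrow> ('x \<Rightarrow> 'y::finite \<Rightarrow> real)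
    \<Rightarrow> real \<Rightarrow> ereal" where
  "rate_distortion \<Theta> p d D =
     (INF Q\<in>{Q. stochastic Q \<and> exp_dist_Q \<Theta> p Q d \<le> D}. ereal (mutual_info_bar \<Theta> p Q))"

definition seq_distortion :: "('x \<Rightarrow> 'y \<Rightarrow> real) \<Rightarrow> 'x list \<Rightarrow> 'y list \<Rightarrow> real" where
  "seq_distortion d xs ys = (\<Sum>i<length xs. d (xs ! i) (ys ! i)) / real (length xs)"

end

theory Submission
  imports Defs
begin

text \<open>
  Under the i.i.d. hypothesis the sublinear expectation of a function of \<open>(X_1, ..., X_n)\<close>
  dominates its expectation under the product \<open>p_\<theta>^n\<close> of any single marginal law, so the lower
  expectation of the distortion is at most its \<open>p_\<theta>^n\<close>-expectation. Hence one \<open>\<theta>\<close> suffices, and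
  neither weak compactness nor the space \<open>H\<close> plays a role: a test channel \<open>Q\<close> whose distortion and
  mutual information have suprema \<open>\<le> D\<close> and \<open>< R_s\<close> satisfies the same bounds at \<open>\<theta>\<close>, and Shannon's
  random coding argument for the ordinary i.i.d. source \<open>p_\<theta>\<close> applies. About \<open>exp (n R_s)\<close>
  codewords are drawn i.i.d. from the output law of \<open>Q\<close>. By Chebyshev's inequality a source word
  and its channel output are jointly typical (distortion \<open>\<le> D + \<delta>\<close>, information density
  \<open>\<le> I + a\<close>) up to probability \<open>O(1/n)\<close>, and then some codeword is typical with the source word
  except with probability \<open>exp (- exp (n a))\<close>. Averaging over codebooks yields a good one.
\<close>

section \<open>Words and product weights\<close>

definition words :: "nat \<Rightarrow> 'a list set" where
  "words n = {xs. length xs = n}"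

definition word_prob :: "('a \<Rightarrow> real) \<Rightarrow> 'a list \<Rightarrow> real" where
  "word_prob r xs = prod_list (map r xs)"

lemma finite_words [simp]: "finite (words n :: 'a::finite list set)"
  using finite_lists_length_eq[of "UNIV :: 'a set" n] by (simp add: words_def)

lemma words_0 [simp]: "words 0 = {[]}"
  by (auto simp: words_def)

lemma sum_words_Suc:
  "(\<Sum>zs\<in>words (Suc n). F zs) = (\<Sum>z\<in>(UNIV::'a::finite set). \<Sum>zs\<in>words n. F (z # zs))"
proof -
  have words: "words (Suc n) = (\<lambda>(z, zs). z # zs) ` (UNIV \<times> words n)"
    by (auto simp: words_def length_Suc_conv)
  have "inj_on (\<lambda>(z, zs). z # zs) (UNIV \<times> words n)"
    by (auto simp: inj_on_def)
  then show ?thesis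
    unfolding words by (subst sum.reindex) (simp_all add: sum.cartesian_product')
qed

lemma sum_words_snoc:
  "(\<Sum>zs\<in>words (Suc n). F zs) = (\<Sum>zs\<in>words n. \<Sum>z\<in>(UNIV::'a::finite set). F (zs @ [z]))"
proof -
  have words: "words (Suc n) = (\<lambda>(zs, z). zs @ [z]) ` (words n \<times> UNIV)"
  proof (intro set_eqI iffI)
    fix xs assume "xs \<in> words (Suc n)"
    then have "xs = butlast xs @ [last xs]" "butlast xs \<in> words n"
      by (auto simp: words_def intro!: append_butlast_last_id[symmetric])
    then show "xs \<in> (\<lambda>(zs, z). zs @ [z]) ` (words n \<times> UNIV)"
      by (metis (no_types, lifting) UNIV_I mem_Sigma_iff pair_imageI)
  qed (auto simp: words_def)
  have "inj_on (\<lambda>(zs, z). zs @ [z]) (words n \<times> UNIV)"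
    by (auto simp: inj_on_def)
  then show ?thesis
    unfolding words by (subst sum.reindex) (simp_all add: sum.cartesian_product')
qed

lemma sum_words_pairs:
  fixes F :: "'a::finite list \<Rightarrow> 'b::finite list \<Rightarrow> real"
  shows "(\<Sum>xs\<in>words n. \<Sum>ys\<in>words n. F xs ys) = (\<Sum>zs\<in>words n. F (map fst zs) (map snd zs))"
proof (induction n arbitrary: F)
  case (Suc n)
  have "(\<Sum>xs\<in>words (Suc n). \<Sum>ys\<in>words (Suc n). F xs ys)
      = (\<Sum>x\<in>UNIV. \<Sum>y\<in>UNIV. \<Sum>zs\<in>words n. F (x # map fst zs) (y # map snd zs))"
    by (simp add: sum_words_Suc sum.swap[of _ UNIV "words n"] Suc)
  also have "\<dots> = (\<Sum>zs\<in>words (Suc n). F (map fst zs) (map snd zs))"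
    by (simp add: sum_words_Suc sum.cartesian_product'[of _ UNIV UNIV, simplified])
  finally show ?case .
qed simp

lemma word_prob_Nil [simp]: "word_prob r [] = 1"
  by (simp add: word_prob_def)

lemma word_prob_Cons [simp]: "word_prob r (z # zs) = r z * word_prob r zs"
  by (simp add: word_prob_def)

lemma word_prob_append [simp]: "word_prob r (xs @ ys) = word_prob r xs * word_prob r ys"
  by (simp add: word_prob_def)

lemma word_prob_nonneg: "(\<And>z. r z \<ge> 0) \<Longrightarrow> word_prob r zs \<ge> 0"
  by (induction zs) auto

lemma word_prob_eq_0_iff: "word_prob r zs = 0 \<longleftrightarrow> (\<exists>z\<in>set zs. r z = 0)"
  by (induction zs) auto

lemma word_prob_pos: "\<forall>z\<in>set zs. r z > 0 \<Longrightarrow> word_prob r zs > 0"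
  by (induction zs) auto

lemma ln_word_prob: "\<forall>z\<in>set zs. r z > 0 \<Longrightarrow> ln (word_prob r zs) = (\<Sum>z\<leftarrow>zs. ln (r z))"
proof (induction zs)
  case (Cons z zs)
  then show ?case
    using ln_mult[of "r z" "word_prob r zs"] word_prob_pos[of zs r] by simp
qed simp

lemma word_prob_map: "word_prob r (map f zs) = word_prob (r \<circ> f) zs"
  by (simp add: word_prob_def)

lemma sum_word_prob: "(\<Sum>zs\<in>words n. word_prob r zs) = (\<Sum>z\<in>(UNIV::'a::finite set). r z) ^ n"
  by (induction n)
    (simp_all add: sum_words_Suc sum_distrib_left[symmetric] sum_distrib_right[symmetric])

lemma sum_word_prob_zip:
  fixes Q :: "'a::finite \<Rightarrow> 'b::finite \<Rightarrow> real"
  assumes "\<And>x. (\<Sum>y\<in>UNIV. Q x y) = 1"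
  shows "(\<Sum>ys\<in>words (length xs). word_prob (case_prod Q) (zip xs ys)) = 1"
  by (induction xs)
    (simp_all add: sum_words_Suc sum_distrib_left[symmetric] sum_distrib_right[symmetric] assms)

lemma sum_word_prob_sum_list:
  assumes "(\<Sum>z\<in>(UNIV::'a::finite set). r z) = 1"
  shows "(\<Sum>zs\<in>words n. word_prob r zs * sum_list (map g zs)) = real n * (\<Sum>z\<in>UNIV. r z * g z)"
proof (induction n)
  case (Suc n)
  have "(\<Sum>zs\<in>words (Suc n). word_prob r zs * sum_list (map g zs))
     = (\<Sum>z\<in>UNIV. r z * g z * (\<Sum>zs\<in>words n. word_prob r zs)
          + r z * (\<Sum>zs\<in>words n. word_prob r zs * sum_list (map g zs)))"
    by (simp add: sum_words_Suc algebra_simps sum.distrib sum_distrib_left)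
  also have "\<dots> = (\<Sum>z\<in>UNIV. r z * g z) + real n * (\<Sum>z\<in>UNIV. r z * g z)"
    by (simp add: Suc sum_word_prob assms sum.distrib flip: sum_distrib_right)
  finally show ?case
    by (simp add: algebra_simps)
qed simp

lemma sum_word_prob_sum_list_square:
  assumes "(\<Sum>z\<in>(UNIV::'a::finite set). r z) = 1" "(\<Sum>z\<in>UNIV. r z * g z) = 0"
  shows "(\<Sum>zs\<in>words n. word_prob r zs * (sum_list (map g zs))\<^sup>2)
    = real n * (\<Sum>z\<in>UNIV. r z * (g z)\<^sup>2)"
proof (induction n)
  case (Suc n)
  have "(\<Sum>zs\<in>words (Suc n). word_prob r zs * (sum_list (map g zs))\<^sup>2)
     = (\<Sum>z\<in>UNIV. r z * (g z)\<^sup>2 * (\<Sum>zs\<in>words n. word_prob r zs)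
          + 2 * (r z * g z) * (\<Sum>zs\<in>words n. word_prob r zs * sum_list (map g zs))
          + r z * (\<Sum>zs\<in>words n. word_prob r zs * (sum_list (map g zs))\<^sup>2))"
    by (simp add: sum_words_Suc algebra_simps power2_eq_square sum.distrib sum_distrib_left)
  also have "\<dots> = (\<Sum>z\<in>UNIV. r z * (g z)\<^sup>2) + real n * (\<Sum>z\<in>UNIV. r z * (g z)\<^sup>2)"
    by (simp add: Suc sum_word_prob sum_word_prob_sum_list assms sum.distrib
        flip: sum_distrib_right)
  finally show ?case
    by (simp add: algebra_simps)
qed simp

lemma chebyshev_word_prob:
  fixes r h :: "'a::finite \<Rightarrow> real"
  assumes r_nonneg: "\<And>z. r z \<ge> 0" and r_sum: "(\<Sum>z\<in>UNIV. r z) = 1" and "\<delta> > 0" and "n \<ge> 1"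
  defines "m \<equiv> \<Sum>z\<in>UNIV. r z * h z"
  shows "(\<Sum>zs\<in>words n. word_prob r zs * of_bool (sum_list (map h zs) > real n * (m + \<delta>)))
         \<le> (\<Sum>z\<in>UNIV. r z * (h z - m)\<^sup>2) / (real n * \<delta>\<^sup>2)"
proof -
  define g where "g z = h z - m" for z
  have g_mean: "(\<Sum>z\<in>UNIV. r z * g z) = 0"
    by (simp add: g_def right_diff_distrib sum_subtractf m_def sum_distrib_right[symmetric] r_sum)
  have n_delta: "real n * \<delta> > 0" using assms by simp
  have pointwise: "word_prob r zs * of_bool (sum_list (map h zs) > real n * (m + \<delta>))
       \<le> word_prob r zs * (sum_list (map g zs))\<^sup>2 / (real n * \<delta>)\<^sup>2" if "zs \<in> words n" for zs
  proof (cases "sum_list (map h zs) > real n * (m + \<delta>)")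
    case True
    have "sum_list (map g zs) = sum_list (map h zs) - real (length zs) * m"
      by (induction zs) (auto simp: g_def algebra_simps)
    with True that have "real n * \<delta> < sum_list (map g zs)"
      by (simp add: words_def algebra_simps)
    with n_delta have "(real n * \<delta>)\<^sup>2 \<le> (sum_list (map g zs))\<^sup>2"
      by (intro power_mono) auto
    with n_delta have "1 \<le> (sum_list (map g zs))\<^sup>2 / (real n * \<delta>)\<^sup>2"
      by (subst le_divide_eq_1_pos) (use assms in auto)
    from mult_left_mono[OF this word_prob_nonneg[OF r_nonneg]] True show ?thesis
      by simp
  qed (simp add: word_prob_nonneg r_nonneg)
  have "(\<Sum>zs\<in>words n. word_prob r zs * of_bool (sum_list (map h zs) > real n * (m + \<delta>)))
      \<le> (\<Sum>zs\<in>words n. word_prob r zs * (sum_list (map g zs))\<^sup>2) / (real n * \<delta>)\<^sup>2"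
    unfolding sum_divide_distrib by (intro sum_mono pointwise)
  also have "\<dots> = (\<Sum>z\<in>UNIV. r z * (g z)\<^sup>2) / (real n * \<delta>\<^sup>2)"
    unfolding sum_word_prob_sum_list_square[OF r_sum g_mean]
    using assms by (simp add: power2_eq_square)
  finally show ?thesis by (simp add: g_def)
qed

lemma seq_distortion_unzip:
  "seq_distortion d (map fst zs) (map snd zs) = (\<Sum>z\<leftarrow>zs. case_prod d z) / real (length zs)"
  by (simp add: seq_distortion_def sum_list_sum_nth atLeast0LessThan case_prod_unfold)

lemma seq_distortion_le:
  assumes "\<And>x y. d x y \<le> K" "xs \<noteq> []"
  shows "seq_distortion d xs ys \<le> K"
proof -
  have "(\<Sum>i<length xs. d (xs ! i) (ys ! i)) \<le> (\<Sum>i<length xs. K)" by (intro sum_mono assms)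
  then show ?thesis using assms(2) by (simp add: seq_distortion_def divide_le_eq mult.commute)
qed

section \<open>Random codebooks\<close>

lemma power_one_minus_mult_le:
  fixes x y :: real
  assumes "0 \<le> x" "x \<le> 1" "0 \<le> y" "y \<le> 1"
  shows "(1 - x * y) ^ W \<le> 1 - x + exp (- y * real W)"
proof -
  have convex: "((1 - x) + x * b) ^ k \<le> (1 - x) + x * b ^ k" if "0 \<le> b" "b \<le> 1" for b k
  proof (induction k)
    case (Suc k)
    have "((1 - x) + x * b) ^ Suc k \<le> ((1 - x) + x * b) * ((1 - x) + x * b ^ k)"
      using Suc assms that by (simp add: mult_left_mono)
    also have "\<dots> \<le> (1 - x) + x * b ^ Suc k"
    proof -
      have "0 \<le> b ^ k" "b ^ k \<le> 1" using that by (auto simp: power_le_one)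
      then have "0 \<le> x * (1 - x) * (1 - b) * (1 - b ^ k)" using assms that by simp
      then show ?thesis by (simp add: algebra_simps)
    qed
    finally show ?case .
  qed simp
  have "(1 - x * y) ^ W = ((1 - x) + x * (1 - y)) ^ W" by (simp add: algebra_simps)
  also have "\<dots> \<le> (1 - x) + x * (1 - y) ^ W" using convex assms by simp
  also have "\<dots> \<le> (1 - x) + (1 - y) ^ W" using assms by (simp add: mult_left_le_one_le)
  also have "(1 - y) ^ W \<le> exp (- y) ^ W"
    using assms by (intro power_mono) (auto simp: exp_ge_add_one_self[of "-y", simplified])
  also have "exp (- y) ^ W = exp (- y * real W)"
    by (simp add: exp_of_nat_mult[symmetric] mult.commute)
  finally show ?thesis by simp
qed

lemma expected_min_codebook_le:
  fixes q :: "'b::finite \<Rightarrow> real" and \<phi> :: "'b list \<Rightarrow> real" and W :: nat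
  assumes q_nonneg: "\<And>y. q y \<ge> 0" and q_sum: "(\<Sum>y\<in>UNIV. q y) = 1" and "W \<ge> 1"
    and \<phi>_le: "\<And>ys. ys \<in> words n \<Longrightarrow> \<phi> ys \<le> K"
    and \<phi>_good: "\<And>ys. ys \<in> G \<Longrightarrow> \<phi> ys \<le> D"
    and "D \<ge> 0" "K \<ge> 0"
  shows "(\<Sum>C\<in>PiE {..<W} (\<lambda>_. words n). (\<Prod>w<W. word_prob q (C w)) * Min ((\<lambda>w. \<phi> (C w)) ` {..<W}))
         \<le> D + K * (\<Sum>ys\<in>words n. word_prob q ys * of_bool (ys \<notin> G)) ^ W"
proof -
  let ?CB = "PiE {..<W} (\<lambda>_. words n :: 'b list set)"
  have min_le: "Min ((\<lambda>w. \<phi> (C w)) ` {..<W}) \<le> D + K * (\<Prod>w<W. of_bool (C w \<notin> G))"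
    if "C \<in> ?CB" for C
  proof (cases "\<exists>w<W. C w \<in> G")
    case True
    then obtain w where "w < W" "C w \<in> G" by blast
    then have "Min ((\<lambda>w. \<phi> (C w)) ` {..<W}) \<le> \<phi> (C w)" by (intro Min_le) auto
    also have "\<dots> \<le> D" using \<phi>_good \<open>C w \<in> G\<close> by simp
    finally have "Min ((\<lambda>w. \<phi> (C w)) ` {..<W}) \<le> D" .
    moreover have "(\<Prod>w<W. of_bool (C w \<notin> G)) = (0::real)"
      using \<open>w < W\<close> \<open>C w \<in> G\<close> by (intro prod_zero) auto
    ultimately show ?thesis by (simp only: mult_zero_right add_0_right)
  next
    case False
    have "Min ((\<lambda>w. \<phi> (C w)) ` {..<W}) \<le> \<phi> (C 0)" using \<open>W \<ge> 1\<close> by (intro Min_le) auto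
    also have "\<dots> \<le> K" using \<phi>_le that \<open>W \<ge> 1\<close> by (auto simp: PiE_iff)
    finally show ?thesis using False \<open>D \<ge> 0\<close> by simp
  qed
  have "(\<Sum>C\<in>?CB. (\<Prod>w<W. word_prob q (C w)) * Min ((\<lambda>w. \<phi> (C w)) ` {..<W}))
      \<le> (\<Sum>C\<in>?CB. (\<Prod>w<W. word_prob q (C w)) * (D + K * (\<Prod>w<W. of_bool (C w \<notin> G))))"
    by (intro sum_mono mult_left_mono min_le prod_nonneg) (auto simp: word_prob_nonneg q_nonneg)
  also have "\<dots> = D * (\<Sum>C\<in>?CB. \<Prod>w<W. word_prob q (C w))
      + K * (\<Sum>C\<in>?CB. \<Prod>w<W. word_prob q (C w) * of_bool (C w \<notin> G))"
    by (simp add: algebra_simps sum.distrib sum_distrib_left prod.distrib)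
  also have "(\<Sum>C\<in>?CB. \<Prod>w<W. word_prob q (C w)) = (\<Prod>w<W. \<Sum>ys\<in>words n. word_prob q ys)"
    by (subst prod_sum_PiE) auto
  also have "(\<Sum>C\<in>?CB. \<Prod>w<W. word_prob q (C w) * of_bool (C w \<notin> G))
      = (\<Prod>w<W. \<Sum>ys\<in>words n. word_prob q ys * of_bool (ys \<notin> G))"
    by (subst prod_sum_PiE) auto
  finally show ?thesis by (simp add: sum_word_prob q_sum)
qed

lemma exists_le_weighted_average:
  assumes "finite S" "S \<noteq> {}" "\<And>C. C \<in> S \<Longrightarrow> w C \<ge> 0" "(\<Sum>C\<in>S. w C) = (1::real)"
  shows "\<exists>C\<in>S. \<Phi> C \<le> (\<Sum>C\<in>S. w C * \<Phi> C)"
proof -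
  have "Min (\<Phi> ` S) \<in> \<Phi> ` S" using assms(1,2) by simp
  then obtain C where C: "C \<in> S" "\<Phi> C = Min (\<Phi> ` S)" by auto
  have "\<Phi> C = (\<Sum>C'\<in>S. w C' * \<Phi> C)" by (simp add: assms(4) flip: sum_distrib_right)
  also have "\<dots> \<le> (\<Sum>C'\<in>S. w C' * \<Phi> C')"
    using C assms(1,3) by (intro sum_mono mult_left_mono) auto
  finally show ?thesis using C(1) by blast
qed

lemma exists_codebook_le_average:
  fixes q :: "'b::finite \<Rightarrow> real" and W :: nat
  assumes "\<And>y. q y \<ge> 0" "(\<Sum>y\<in>UNIV. q y) = 1"
  shows "\<exists>C\<in>PiE {..<W} (\<lambda>_. words n).
           \<Phi> C \<le> (\<Sum>C\<in>PiE {..<W} (\<lambda>_. words n). (\<Prod>w<W. word_prob q (C w)) * \<Phi> C)"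
proof (rule exists_le_weighted_average)
  show "PiE {..<W} (\<lambda>_. words n) \<noteq> {}"
    by (subst PiE_eq_empty_iff) (auto simp: words_def intro!: exI[of _ "replicate n undefined"])
  show "(\<Sum>C\<in>PiE {..<W} (\<lambda>_. words n). \<Prod>w<W. word_prob q (C w)) = 1"
    by (subst prod_sum_PiE[symmetric]) (auto simp: sum_word_prob assms)
qed (auto intro!: prod_nonneg word_prob_nonneg assms finite_PiE)

lemma exists_nearest_codeword:
  fixes W :: nat
  assumes "W \<ge> 1"
  shows "\<exists>f. \<forall>xs. f xs < W \<and> \<phi> xs (f xs) = Min (\<phi> xs ` {..<W})"
proof -
  have "\<exists>w<W. \<phi> xs w = Min (\<phi> xs ` {..<W})" for xs
  proof -
    have "Min (\<phi> xs ` {..<W}) \<in> \<phi> xs ` {..<W}"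
      by (rule Min_in) (use assms in \<open>auto simp: lessThan_empty_iff\<close>)
    then show ?thesis by auto
  qed
  then show ?thesis by metis
qed

lemma codebook_size:
  assumes "R \<ge> 0" "a > 0" "n > 0"
  shows "\<exists>W::nat. W \<ge> 1 \<and> ln (real W) / real n \<le> R + a \<and>
           exp (- exp (- (real n * R)) * real W) \<le> 1 / (real n * a)"
proof -
  define W where "W = nat \<lfloor>exp (real n * (R + a))\<rfloor>"
  have exp_ge_1: "exp (real n * (R + a)) \<ge> 1" using assms by simp
  then have "W \<ge> 1" by (simp add: W_def le_nat_iff)
  have W_le: "real W \<le> exp (real n * (R + a))"
    using exp_ge_1 by (simp add: W_def)
  have W_ge: "real W \<ge> exp (real n * (R + a)) - 1"
    using exp_ge_1 real_of_int_floor_add_one_gt[of "exp (real n * (R + a))"] by (simp add: W_def)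
  have "ln (real W) \<le> real n * (R + a)"
    using ln_le_cancel_iff[of "real W" "exp (real n * (R + a))"] W_le \<open>W \<ge> 1\<close> by simp
  then have rate: "ln (real W) / real n \<le> R + a"
    using assms by (simp add: divide_le_eq mult.commute)
  have "exp (- (real n * R)) \<le> 1" using assms by simp
  then have "real n * a \<le> exp (real n * a) - exp (- (real n * R))"
    using exp_ge_add_one_self[of "real n * a"] by linarith
  also have "\<dots> = exp (- (real n * R)) * (exp (real n * (R + a)) - 1)"
    by (simp add: algebra_simps flip: exp_add)
  also have "\<dots> \<le> exp (- (real n * R)) * real W"
    using W_ge by (intro mult_left_mono) auto
  finally have "exp (- exp (- (real n * R)) * real W) \<le> exp (- (real n * a))"
    by simp
  also have "\<dots> \<le> 1 / (real n * a)"
    using exp_ge_add_one_self[of "real n * a"] assms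
    by (simp add: exp_minus divide_simps del: exp_ge_add_one_self)
  finally show ?thesis using rate \<open>W \<ge> 1\<close> by blast
qed

section \<open>Random coding for an i.i.d. source\<close>

locale random_coding =
  fixes p :: "'x::finite \<Rightarrow> real" and Q :: "'x \<Rightarrow> 'y::finite \<Rightarrow> real"
    and d :: "'x \<Rightarrow> 'y \<Rightarrow> real"
  assumes p_nonneg: "\<And>x. p x \<ge> 0" and p_sum: "(\<Sum>x\<in>UNIV. p x) = 1"
    and stochastic_Q: "stochastic Q" and d_nonneg: "\<And>x y. d x y \<ge> 0"
begin

lemma Q_nonneg: "Q x y \<ge> 0" and Q_sum: "(\<Sum>y\<in>UNIV. Q x y) = 1"
  using stochastic_Q by (auto simp: stochastic_def)

definition output_dist :: "'y \<Rightarrow> real" where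
  "output_dist y = (\<Sum>x\<in>UNIV. Q x y * p x)"

definition joint_dist :: "'x \<times> 'y \<Rightarrow> real" where
  "joint_dist = (\<lambda>(x, y). p x * Q x y)"

definition info_density :: "'x \<times> 'y \<Rightarrow> real" where
  "info_density = (\<lambda>(x, y). ln (Q x y / output_dist y))"

definition mean_distortion :: real where
  "mean_distortion = (\<Sum>z\<in>UNIV. joint_dist z * case_prod d z)"

definition mutual_info :: real where
  "mutual_info = (\<Sum>z\<in>UNIV. joint_dist z * info_density z)"

definition distortion_variance :: real where
  "distortion_variance = (\<Sum>z\<in>UNIV. joint_dist z * (case_prod d z - mean_distortion)\<^sup>2)"

definition info_variance :: real where
  "info_variance = (\<Sum>z\<in>UNIV. joint_dist z * (info_density z - mutual_info)\<^sup>2)"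

definition max_distortion :: real where
  "max_distortion = Max (range (case_prod d))"

lemma output_dist_nonneg: "output_dist y \<ge> 0"
  unfolding output_dist_def by (intro sum_nonneg) (simp add: Q_nonneg p_nonneg)

lemma output_dist_sum: "(\<Sum>y\<in>UNIV. output_dist y) = 1"
  unfolding output_dist_def by (subst sum.swap) (simp add: Q_sum p_sum flip: sum_distrib_right)

lemma joint_dist_le_output_dist: "joint_dist (x, y) \<le> output_dist y"
  unfolding output_dist_def joint_dist_def
  using member_le_sum[of x UNIV "\<lambda>x. Q x y * p x"] by (simp add: Q_nonneg p_nonneg mult.commute)

lemma joint_dist_nonneg: "joint_dist z \<ge> 0"
  by (simp add: joint_dist_def case_prod_unfold p_nonneg Q_nonneg)

lemma joint_dist_sum: "(\<Sum>z\<in>UNIV. joint_dist z) = 1"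
  by (simp add: sum.cartesian_product'[of _ UNIV UNIV, simplified] joint_dist_def Q_sum p_sum
      flip: sum_distrib_left)

lemma joint_dist_pos_iff: "joint_dist (x, y) > 0 \<longleftrightarrow> p x > 0 \<and> Q x y > 0"
  using p_nonneg[of x] Q_nonneg[of x y] by (auto simp: joint_dist_def zero_less_mult_iff)

lemma output_dist_pos: "joint_dist (x, y) > 0 \<Longrightarrow> output_dist y > 0"
  using joint_dist_le_output_dist[of x y] by linarith

lemma word_prob_joint_dist:
  "word_prob joint_dist zs = word_prob p (map fst zs) * word_prob (case_prod Q) zs"
  by (induction zs) (auto simp: joint_dist_def)

lemma mean_distortion_eq:
  "mean_distortion = (\<Sum>x\<in>UNIV. \<Sum>y\<in>UNIV. p x * Q x y * d x y)"
  by (simp add: mean_distortion_def sum.cartesian_product'[of _ UNIV UNIV, simplified]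
      joint_dist_def)

lemma mutual_info_eq:
  "mutual_info = (\<Sum>x\<in>UNIV. \<Sum>y\<in>UNIV. p x * Q x y * ln (Q x y / (\<Sum>x'\<in>UNIV. Q x' y * p x')))"
  by (simp add: mutual_info_def sum.cartesian_product'[of _ UNIV UNIV, simplified] joint_dist_def
      info_density_def output_dist_def)

lemma d_le_max_distortion: "d x y \<le> max_distortion"
  unfolding max_distortion_def by (rule Max_ge) (auto intro: range_eqI[of _ _ "(x, y)"])

lemma max_distortion_nonneg: "max_distortion \<ge> 0"
  using d_nonneg d_le_max_distortion order.trans by blast

lemma mean_distortion_le_max: "mean_distortion \<le> max_distortion"
proof -
  have "mean_distortion \<le> (\<Sum>z\<in>UNIV. joint_dist z * max_distortion)"
    unfolding mean_distortion_def
    by (intro sum_mono mult_left_mono) (auto simp: joint_dist_nonneg d_le_max_distortion)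
  then show ?thesis by (simp add: joint_dist_sum flip: sum_distrib_right)
qed

lemma distortion_variance_nonneg: "distortion_variance \<ge> 0"
  unfolding distortion_variance_def by (intro sum_nonneg) (simp add: joint_dist_nonneg)

lemma info_variance_nonneg: "info_variance \<ge> 0"
  unfolding info_variance_def by (intro sum_nonneg) (simp add: joint_dist_nonneg)

lemma mean_distortion_nonneg: "mean_distortion \<ge> 0"
  unfolding mean_distortion_def
  by (intro sum_nonneg) (simp add: joint_dist_nonneg d_nonneg case_prod_unfold)

text \<open>Both bounds come from \<open>ln t \<le> t - 1\<close>, applied to \<open>output_dist y / Q x y\<close> and to
  \<open>Q x y / output_dist y\<close>.\<close>

lemma mutual_info_nonneg: "mutual_info \<ge> 0"
proof -
  have "joint_dist z * info_density z \<ge> joint_dist z - p (fst z) * output_dist (snd z)" for z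
  proof (cases z)
    case (Pair x y)
    show ?thesis
    proof (cases "joint_dist z > 0")
      case True
      then have pos: "Q x y > 0" "output_dist y > 0"
        using Pair joint_dist_pos_iff output_dist_pos by auto
      have "1 - output_dist y / Q x y \<le> ln (Q x y / output_dist y)"
        using ln_le_minus_one[of "output_dist y / Q x y"] pos by (simp add: ln_div)
      moreover have
        "joint_dist z * (1 - output_dist y / Q x y) = joint_dist z - p x * output_dist y"
        using pos by (simp add: Pair joint_dist_def field_simps)
      ultimately show ?thesis
        using mult_left_mono[of "1 - output_dist y / Q x y" _ "joint_dist z"] True
        by (simp add: Pair info_density_def)
    next
      case False
      then show ?thesis
        using joint_dist_nonneg[of z] p_nonneg[of x] output_dist_nonneg[of y] Pair by simp
    qed
  qed
  then have "mutual_info \<ge> (\<Sum>z\<in>UNIV. joint_dist z - p (fst z) * output_dist (snd z))"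
    unfolding mutual_info_def by (intro sum_mono)
  also have "(\<Sum>z\<in>UNIV. joint_dist z - p (fst z) * output_dist (snd z)) = 0"
    by (simp add: sum_subtractf sum.cartesian_product'[of _ UNIV UNIV, simplified] joint_dist_def
        Q_sum output_dist_sum p_sum flip: sum_distrib_left sum_distrib_right)
  finally show ?thesis .
qed

lemma mutual_info_le_card: "mutual_info \<le> real CARD('x)"
proof -
  have "joint_dist z * info_density z \<le> case_prod Q z" for z
  proof (cases z)
    case (Pair x y)
    show ?thesis
    proof (cases "joint_dist z > 0")
      case True
      then have pos: "Q x y > 0" "output_dist y > 0"
        using Pair joint_dist_pos_iff output_dist_pos by auto
      have "ln (Q x y / output_dist y) \<le> Q x y / output_dist y"
        using ln_le_minus_one[of "Q x y / output_dist y"] pos by simp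
      then have "joint_dist z * info_density z \<le> joint_dist z * (Q x y / output_dist y)"
        using True by (simp add: Pair info_density_def mult_left_mono del: times_divide_eq_right)
      also have "\<dots> \<le> Q x y"
        using joint_dist_le_output_dist[of x y] pos
        by (simp add: Pair field_simps mult_left_mono Q_nonneg)
      finally show ?thesis by (simp add: Pair)
    next
      case False
      then show ?thesis using joint_dist_nonneg[of z] Q_nonneg[of x y] Pair by simp
    qed
  qed
  then have "mutual_info \<le> (\<Sum>z\<in>UNIV. case_prod Q z)"
    unfolding mutual_info_def by (intro sum_mono)
  then show ?thesis
    by (simp add: sum.cartesian_product'[of _ UNIV UNIV, simplified] Q_sum)
qed

text \<open>The information-density condition is stated multiplicatively, so that no logarithm of a
  vanishing probability occurs.\<close>

definition typical :: "real \<Rightarrow> real \<Rightarrow> 'x list \<Rightarrow> 'y list \<Rightarrow> bool" where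
  "typical D' R xs ys \<longleftrightarrow> seq_distortion d xs ys \<le> D' \<and>
     word_prob (case_prod Q) (zip xs ys) \<le> exp (real (length xs) * R) * word_prob output_dist ys"

definition typical_prob :: "real \<Rightarrow> real \<Rightarrow> 'x list \<Rightarrow> real" where
  "typical_prob D' R xs =
     (\<Sum>ys\<in>words (length xs). word_prob (case_prod Q) (zip xs ys) * of_bool (typical D' R xs ys))"

lemma typical_if_sums_le:
  assumes "word_prob joint_dist zs > 0" "zs \<noteq> []"
    and "(\<Sum>z\<leftarrow>zs. case_prod d z) \<le> real (length zs) * D'"
    and "(\<Sum>z\<leftarrow>zs. info_density z) \<le> real (length zs) * R"
  shows "typical D' R (map fst zs) (map snd zs)"
proof -
  have pos: "case_prod Q z > 0 \<and> output_dist (snd z) > 0" if "z \<in> set zs" for z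
  proof -
    have "joint_dist z > 0"
      using that assms(1) joint_dist_nonneg[of z] word_prob_eq_0_iff[of joint_dist zs] by force
    then show ?thesis using joint_dist_pos_iff output_dist_pos by (cases z) auto
  qed
  have "ln (word_prob (case_prod Q) zs) = (\<Sum>z\<leftarrow>zs. ln (case_prod Q z))"
    using pos by (intro ln_word_prob) auto
  moreover have "ln (word_prob output_dist (map snd zs)) = (\<Sum>z\<leftarrow>zs. ln (output_dist (snd z)))"
    using pos by (simp add: word_prob_map ln_word_prob)
  moreover have "(\<Sum>z\<leftarrow>zs. info_density z) = (\<Sum>z\<leftarrow>zs. ln (case_prod Q z) - ln (output_dist (snd z)))"
    using pos
    by (intro arg_cong[where f = sum_list] map_cong) (force simp: info_density_def ln_div)+
  then have "(\<Sum>z\<leftarrow>zs. info_density z)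
      = (\<Sum>z\<leftarrow>zs. ln (case_prod Q z)) - (\<Sum>z\<leftarrow>zs. ln (output_dist (snd z)))"
    by (simp add: sum_list_subtractf)
  ultimately have "ln (word_prob (case_prod Q) zs)
      \<le> real (length zs) * R + ln (word_prob output_dist (map snd zs))"
    using assms(4) by linarith
  moreover have "word_prob (case_prod Q) zs > 0" "word_prob output_dist (map snd zs) > 0"
    using pos by (auto simp: word_prob_map intro!: word_prob_pos)
  ultimately have
    "word_prob (case_prod Q) zs \<le> exp (real (length zs) * R) * word_prob output_dist (map snd zs)"
    by (metis exp_add exp_le_cancel_iff exp_ln)
  moreover have "seq_distortion d (map fst zs) (map snd zs) \<le> D'"
    using assms(2,3) by (simp add: seq_distortion_unzip divide_le_eq mult.commute)
  ultimately show ?thesis by (simp add: typical_def zip_map_fst_snd)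
qed

lemma atypical_prob_le:
  assumes "n \<ge> 1" "\<delta> > 0" "a > 0"
  shows "(\<Sum>zs\<in>words n. word_prob joint_dist zs *
            of_bool (\<not> typical (mean_distortion + \<delta>) (mutual_info + a) (map fst zs) (map snd zs)))
    \<le> distortion_variance / (real n * \<delta>\<^sup>2) + info_variance / (real n * a\<^sup>2)"
proof -
  let ?big_d = "\<lambda>zs. (\<Sum>z\<leftarrow>zs. case_prod d z) > real n * (mean_distortion + \<delta>)"
  let ?big_i = "\<lambda>zs. (\<Sum>z\<leftarrow>zs. info_density z) > real n * (mutual_info + a)"
  have pointwise: "word_prob joint_dist zs *
          of_bool (\<not> typical (mean_distortion + \<delta>) (mutual_info + a) (map fst zs) (map snd zs))
      \<le> word_prob joint_dist zs * of_bool (?big_d zs)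
        + word_prob joint_dist zs * of_bool (?big_i zs)"
    if "zs \<in> words n" for zs
  proof (cases "word_prob joint_dist zs > 0")
    case True
    have "zs \<noteq> []" using that assms(1) by (auto simp: words_def)
    with True typical_if_sums_le[of zs] that
    have "\<not> typical (mean_distortion + \<delta>) (mutual_info + a) (map fst zs) (map snd zs) \<Longrightarrow>
          ?big_d zs \<or> ?big_i zs"
      by (force simp: words_def)
    then show ?thesis using True by auto
  next
    case False
    then show ?thesis
      using word_prob_nonneg[of joint_dist zs, OF joint_dist_nonneg] by simp
  qed
  have "(\<Sum>zs\<in>words n. word_prob joint_dist zs *
            of_bool (\<not> typical (mean_distortion + \<delta>) (mutual_info + a) (map fst zs) (map snd zs)))
      \<le> (\<Sum>zs\<in>words n. word_prob joint_dist zs * of_bool (?big_d zs))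
        + (\<Sum>zs\<in>words n. word_prob joint_dist zs * of_bool (?big_i zs))"
    unfolding sum.distrib[symmetric] by (intro sum_mono pointwise)
  also have "\<dots> \<le> distortion_variance / (real n * \<delta>\<^sup>2) + info_variance / (real n * a\<^sup>2)"
    using chebyshev_word_prob[OF joint_dist_nonneg joint_dist_sum assms(2,1), of "case_prod d"]
      chebyshev_word_prob[OF joint_dist_nonneg joint_dist_sum assms(3,1), of info_density]
    by (simp add: mean_distortion_def mutual_info_def distortion_variance_def info_variance_def)
  finally show ?thesis .
qed

lemma typical_prob_bounds: "0 \<le> typical_prob D' R xs" "typical_prob D' R xs \<le> 1"
proof -
  have "typical_prob D' R xs \<le> (\<Sum>ys\<in>words (length xs). word_prob (case_prod Q) (zip xs ys))"
    unfolding typical_prob_def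
    by (intro sum_mono) (auto intro!: word_prob_nonneg simp: Q_nonneg case_prod_unfold)
  then show "typical_prob D' R xs \<le> 1" by (simp add: sum_word_prob_zip Q_sum)
  show "0 \<le> typical_prob D' R xs"
    unfolding typical_prob_def
    by (intro sum_nonneg) (auto intro!: word_prob_nonneg simp: Q_nonneg case_prod_unfold)
qed

text \<open>A codeword drawn from the output law is typical with \<open>xs\<close> with probability at least
  \<open>exp (- n R) * typical_prob D' R xs\<close>; the \<open>W\<close> codewords are drawn independently.\<close>

lemma expected_min_codebook_typical:
  assumes "xs \<in> words n" "n \<ge> 1" "W \<ge> 1" "D' \<ge> 0" "R \<ge> 0"
  shows "(\<Sum>C\<in>PiE {..<W} (\<lambda>_. words n). (\<Prod>w<W. word_prob output_dist (C w)) *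
            Min ((\<lambda>w. seq_distortion d xs (C w)) ` {..<W}))
    \<le> D' + max_distortion * (1 - typical_prob D' R xs + exp (- exp (- (real n * R)) * real W))"
proof -
  define G where "G = {ys. typical D' R xs ys}"
  define y0 where "y0 = exp (- (real n * R))"
  define t where "t = typical_prob D' R xs"
  define qG where "qG = (\<Sum>ys\<in>words n. word_prob output_dist ys * of_bool (ys \<in> G))"
  have len: "length xs = n" "xs \<noteq> []" using assms(1,2) by (auto simp: words_def)
  have y0: "0 \<le> y0" "y0 \<le> 1" using assms(5) by (auto simp: y0_def)
  have wp_nonneg: "word_prob output_dist ys \<ge> 0" for ys
    by (simp add: word_prob_nonneg output_dist_nonneg)
  have miss: "(\<Sum>ys\<in>words n. word_prob output_dist ys * of_bool (ys \<notin> G)) = 1 - qG"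
    by (simp add: qG_def sum_word_prob output_dist_sum of_bool_not_iff algebra_simps sum_subtractf)
  have "qG \<le> (\<Sum>ys\<in>words n. word_prob output_dist ys)"
    unfolding qG_def by (intro sum_mono) (simp add: wp_nonneg)
  then have "qG \<le> 1" by (simp add: sum_word_prob output_dist_sum)
  have "y0 * t \<le> qG"
    unfolding qG_def t_def typical_prob_def sum_distrib_left len(1)
  proof (intro sum_mono)
    fix ys
    have "y0 * word_prob (case_prod Q) (zip xs ys) \<le> word_prob output_dist ys" if "ys \<in> G"
    proof -
      have "y0 * word_prob (case_prod Q) (zip xs ys)
          \<le> y0 * (exp (real n * R) * word_prob output_dist ys)"
        using that y0 len by (intro mult_left_mono) (auto simp: G_def typical_def)
      then show ?thesis by (simp add: y0_def exp_minus field_simps)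
    qed
    then show "y0 * (word_prob (case_prod Q) (zip xs ys) * of_bool (typical D' R xs ys))
        \<le> word_prob output_dist ys * of_bool (ys \<in> G)"
      by (simp add: G_def)
  qed
  have "(\<Sum>C\<in>PiE {..<W} (\<lambda>_. words n). (\<Prod>w<W. word_prob output_dist (C w)) *
            Min ((\<lambda>w. seq_distortion d xs (C w)) ` {..<W}))
      \<le> D' + max_distortion * (\<Sum>ys\<in>words n. word_prob output_dist ys * of_bool (ys \<notin> G)) ^ W"
    by (rule expected_min_codebook_le[OF output_dist_nonneg output_dist_sum assms(3) _ _ assms(4)
        max_distortion_nonneg])
      (auto simp: G_def typical_def intro: seq_distortion_le[OF d_le_max_distortion len(2)])
  also have "\<dots> = D' + max_distortion * (1 - qG) ^ W"
    by (simp only: miss)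
  also have "(1 - qG) ^ W \<le> (1 - t * y0) ^ W"
    using \<open>y0 * t \<le> qG\<close> \<open>qG \<le> 1\<close> by (intro power_mono) (auto simp: mult.commute)
  also have "\<dots> \<le> 1 - t + exp (- y0 * real W)"
    using typical_prob_bounds y0 by (intro power_one_minus_mult_le) (auto simp: t_def)
  finally show ?thesis
    using max_distortion_nonneg by (simp add: t_def y0_def mult_left_mono)
qed

lemma sum_word_prob_typical_prob:
  "(\<Sum>xs\<in>words n. word_prob p xs * typical_prob D' R xs)
    = 1 - (\<Sum>zs\<in>words n. word_prob joint_dist zs *
             of_bool (\<not> typical D' R (map fst zs) (map snd zs)))"
proof -
  have "(\<Sum>zs\<in>words n. word_prob joint_dist zs * of_bool (\<not> typical D' R (map fst zs) (map snd zs)))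
      = (\<Sum>xs\<in>words n. \<Sum>ys\<in>words n.
           word_prob p xs * word_prob (case_prod Q) (zip xs ys) * of_bool (\<not> typical D' R xs ys))"
    by (simp only: sum_words_pairs word_prob_joint_dist zip_map_fst_snd)
  also have "\<dots> = (\<Sum>xs\<in>words n. word_prob p xs * (1 - typical_prob D' R xs))"
  proof (intro sum.cong refl)
    fix xs :: "'x list" assume "xs \<in> words n"
    then have "n = length xs" by (simp add: words_def)
    then show "(\<Sum>ys\<in>words n. word_prob p xs * word_prob (case_prod Q) (zip xs ys) *
          of_bool (\<not> typical D' R xs ys)) = word_prob p xs * (1 - typical_prob D' R xs)"
      by (simp add: typical_prob_def sum_word_prob_zip Q_sum of_bool_not_iff algebra_simps
          sum_subtractf flip: sum_distrib_left)
  qed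
  also have "\<dots> = 1 - (\<Sum>xs\<in>words n. word_prob p xs * typical_prob D' R xs)"
    by (simp add: right_diff_distrib sum_subtractf sum_word_prob p_sum)
  finally show ?thesis by simp
qed

lemma random_codebook_distortion_le_atypical:
  assumes "n \<ge> 1" "W \<ge> 1" "D' \<ge> 0" "R \<ge> 0"
  shows "(\<Sum>C\<in>PiE {..<W} (\<lambda>_. words n). (\<Prod>w<W. word_prob output_dist (C w)) *
            (\<Sum>xs\<in>words n. word_prob p xs * Min ((\<lambda>w. seq_distortion d xs (C w)) ` {..<W})))
    \<le> D' + max_distortion * exp (- exp (- (real n * R)) * real W)
      + max_distortion *
        (\<Sum>zs\<in>words n. word_prob joint_dist zs * of_bool (\<not> typical D' R (map fst zs) (map snd zs)))"
proof -
  let ?E = "exp (- exp (- (real n * R)) * real W)"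
  have "(\<Sum>C\<in>PiE {..<W} (\<lambda>_. words n). (\<Prod>w<W. word_prob output_dist (C w)) *
            (\<Sum>xs\<in>words n. word_prob p xs * Min ((\<lambda>w. seq_distortion d xs (C w)) ` {..<W})))
      = (\<Sum>xs\<in>words n. word_prob p xs * (\<Sum>C\<in>PiE {..<W} (\<lambda>_. words n).
            (\<Prod>w<W. word_prob output_dist (C w)) * Min ((\<lambda>w. seq_distortion d xs (C w)) ` {..<W})))"
    by (simp add: sum_distrib_left mult.left_commute sum.swap[of _ "PiE _ _"])
  also have "\<dots> \<le> (\<Sum>xs\<in>words n. word_prob p xs *
        (D' + max_distortion * (1 - typical_prob D' R xs + ?E)))"
    using expected_min_codebook_typical assms
    by (intro sum_mono mult_left_mono) (auto simp: word_prob_nonneg p_nonneg)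
  also have "\<dots> = D' + max_distortion * ?E
      + max_distortion * (1 - (\<Sum>xs\<in>words n. word_prob p xs * typical_prob D' R xs))"
    by (simp add: algebra_simps sum.distrib sum_subtractf sum_word_prob p_sum
        flip: sum_distrib_left sum_distrib_right)
  finally show ?thesis by (simp add: sum_word_prob_typical_prob)
qed

lemma random_codebook_distortion_le:
  assumes "n \<ge> 1" "W \<ge> 1" "a > 0" "\<delta> > 0"
    and "exp (- exp (- (real n * (mutual_info + a))) * real W) \<le> 1 / (real n * a)"
  shows "(\<Sum>C\<in>PiE {..<W} (\<lambda>_. words n). (\<Prod>w<W. word_prob output_dist (C w)) *
            (\<Sum>xs\<in>words n. word_prob p xs * Min ((\<lambda>w. seq_distortion d xs (C w)) ` {..<W})))
    \<le> mean_distortion + \<delta>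
      + max_distortion * (1 / a + distortion_variance / \<delta>\<^sup>2 + info_variance / a\<^sup>2) / real n"
proof -
  let ?R = "mutual_info + a"
  have "?R \<ge> 0" using mutual_info_nonneg \<open>a > 0\<close> by simp
  let ?atypical = "\<Sum>zs\<in>words n. word_prob joint_dist zs *
    of_bool (\<not> typical (mean_distortion + \<delta>) ?R (map fst zs) (map snd zs))"
  have "(\<Sum>C\<in>PiE {..<W} (\<lambda>_. words n). (\<Prod>w<W. word_prob output_dist (C w)) *
            (\<Sum>xs\<in>words n. word_prob p xs * Min ((\<lambda>w. seq_distortion d xs (C w)) ` {..<W})))
      \<le> mean_distortion + \<delta> + max_distortion * exp (- exp (- (real n * ?R)) * real W)
        + max_distortion * ?atypical"
    using mean_distortion_nonneg \<open>\<delta> > 0\<close>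
    by (intro random_codebook_distortion_le_atypical \<open>n \<ge> 1\<close> \<open>W \<ge> 1\<close> \<open>?R \<ge> 0\<close>) simp
  also have "\<dots> \<le> mean_distortion + \<delta> + max_distortion * (1 / (real n * a))
      + max_distortion * (distortion_variance / (real n * \<delta>\<^sup>2) + info_variance / (real n * a\<^sup>2))"
    using assms(5) atypical_prob_le[OF \<open>n \<ge> 1\<close> \<open>\<delta> > 0\<close> \<open>a > 0\<close>] max_distortion_nonneg
    by (intro add_mono mult_left_mono order.refl) simp_all
  also have "\<dots> = mean_distortion + \<delta>
      + max_distortion * (1 / a + distortion_variance / \<delta>\<^sup>2 + info_variance / a\<^sup>2) / real n"
    using assms(1,3,4) by (simp add: field_simps)
  finally show ?thesis .
qed

theorem exists_good_codebook:
  assumes "mean_distortion \<le> D" "mutual_info < Rs" "\<epsilon> > 0"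
  shows "\<exists>n\<ge>1. \<exists>W\<ge>1. \<exists>c :: nat \<Rightarrow> 'y list. (\<forall>w<W. length (c w) = n) \<and> ln (real W) / real n \<le> Rs \<and>
           (\<Sum>xs\<in>words n. word_prob p xs * Min ((\<lambda>w. seq_distortion d xs (c w)) ` {..<W})) \<le> D + \<epsilon>"
proof -
  \<comment> \<open>half of the rate gap pays for information typicality, the other half for covering\<close>
  define a where "a = (Rs - mutual_info) / 2"
  define \<delta> where "\<delta> = \<epsilon> / 4"
  define K where "K = max_distortion * (1 / a + distortion_variance / \<delta>\<^sup>2 + info_variance / a\<^sup>2)"
  have "a > 0" "\<delta> > 0" using assms by (simp_all add: a_def \<delta>_def)
  then have "K \<ge> 0"
    using max_distortion_nonneg distortion_variance_nonneg info_variance_nonneg by (simp add: K_def)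
  obtain n :: nat where n: "K / (\<epsilon> / 2) < real n" using reals_Archimedean2 by blast
  moreover have "0 \<le> K / (\<epsilon> / 2)" using \<open>K \<ge> 0\<close> assms(3) by simp
  ultimately have "real n > 0" by linarith
  then have "n \<ge> 1" "K / real n \<le> \<epsilon> / 2"
    using n assms(3) by (simp_all add: field_simps)
  then obtain W where "W \<ge> 1" and rate: "ln (real W) / real n \<le> mutual_info + a + a"
    and "exp (- exp (- (real n * (mutual_info + a))) * real W) \<le> 1 / (real n * a)"
    using codebook_size[of "mutual_info + a" a n] mutual_info_nonneg \<open>a > 0\<close> by auto
  then obtain c where c: "c \<in> PiE {..<W} (\<lambda>_. words n)"
    and "(\<Sum>xs\<in>words n. word_prob p xs * Min ((\<lambda>w. seq_distortion d xs (c w)) ` {..<W}))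
      \<le> mean_distortion + \<delta> + K / real n"
    using random_codebook_distortion_le[OF \<open>n \<ge> 1\<close> \<open>W \<ge> 1\<close> \<open>a > 0\<close> \<open>\<delta> > 0\<close>]
      exists_codebook_le_average[OF output_dist_nonneg output_dist_sum]
    unfolding K_def by (meson order.trans)
  moreover have "mean_distortion + \<delta> + K / real n \<le> D + \<epsilon>"
    using assms \<open>K / real n \<le> \<epsilon> / 2\<close> by (simp add: \<delta>_def)
  moreover have "\<forall>w<W. length (c w) = n" using c by (auto simp: words_def PiE_iff)
  moreover have "ln (real W) / real n \<le> Rs" using rate by (simp add: a_def)
  ultimately show ?thesis using \<open>n \<ge> 1\<close> \<open>W \<ge> 1\<close> by (meson order.trans)
qed

corollary source_coding:
  assumes "mean_distortion \<le> D" "mutual_info < Rs" "\<epsilon> > 0"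
  shows "\<exists>n\<ge>1. \<exists>W f g. W \<ge> 1 \<and> (\<forall>xs. length xs = n \<longrightarrow> f xs < W) \<and> (\<forall>w<W. length (g w) = n) \<and>
           ln (real W) / real n \<le> Rs \<and>
           (\<Sum>xs\<in>words n. word_prob p xs * seq_distortion d xs (g (f xs))) \<le> D + \<epsilon>"
proof -
  obtain n W and g :: "nat \<Rightarrow> 'y list" where "n \<ge> 1" "W \<ge> 1" "\<forall>w<W. length (g w) = n"
    "ln (real W) / real n \<le> Rs"
    and distortion: "(\<Sum>xs\<in>words n. word_prob p xs * Min ((\<lambda>w. seq_distortion d xs (g w)) ` {..<W}))
      \<le> D + \<epsilon>"
    using exists_good_codebook[OF assms] by blast
  moreover obtain f where f: "\<forall>xs. f xs < W \<and>
      seq_distortion d xs (g (f xs)) = Min ((\<lambda>w. seq_distortion d xs (g w)) ` {..<W})"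
    using exists_nearest_codeword[OF \<open>W \<ge> 1\<close>, of "\<lambda>xs w. seq_distortion d xs (g w)"] by blast
  moreover have "(\<Sum>xs\<in>words n. word_prob p xs * seq_distortion d xs (g (f xs))) \<le> D + \<epsilon>"
    using distortion f by simp
  moreover have "\<forall>xs. length xs = n \<longrightarrow> f xs < W" using f by blast
  ultimately show ?thesis by blast
qed

end

section \<open>Sublinear expectations of an i.i.d. source\<close>

definition bounded_measurable :: "'o measure \<Rightarrow> ('o \<Rightarrow> real) \<Rightarrow> bool" where
  "bounded_measurable M f \<longleftrightarrow> f \<in> borel_measurable M \<and> (\<exists>B. \<forall>\<omega>\<in>space M. \<bar>f \<omega>\<bar> \<le> B)"

lemma bounded_measurable_finite_valued:
  assumes "V \<in> measurable M (count_space UNIV)" "finite (V ` space M)"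
  shows "bounded_measurable M (\<lambda>\<omega>. \<psi> (V \<omega>))"
  unfolding bounded_measurable_def
proof
  show "(\<lambda>\<omega>. \<psi> (V \<omega>)) \<in> borel_measurable M"
    using assms(1) by (rule measurable_compose) simp
  have "\<bar>\<psi> (V \<omega>)\<bar> \<le> (\<Sum>v\<in>V ` space M. \<bar>\<psi> v\<bar>)" if "\<omega> \<in> space M" for \<omega>
    using assms(2) that by (intro member_le_sum) auto
  then show "\<exists>B. \<forall>\<omega>\<in>space M. \<bar>\<psi> (V \<omega>)\<bar> \<le> B" by blast
qed

lemma length_Xvec [simp]: "length (Xvec X n \<omega>) = n"
  by (simp add: Xvec_def)

lemma measurable_Xvec:
  fixes X :: "nat \<Rightarrow> 'o \<Rightarrow> 'x::finite"
  assumes "\<forall>i. X i \<in> measurable M (count_space UNIV)"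
  shows "Xvec X n \<in> measurable M (count_space UNIV)"
proof (subst measurable_count_space_eq2_countable, intro conjI ballI)
  fix xs :: "'x list"
  have X_sets: "{\<omega> \<in> space M. X i \<omega> = c} \<in> sets M" for i c
  proof -
    have "X i -` {c} \<inter> space M \<in> sets M" using assms by (intro measurable_sets) auto
    moreover have "X i -` {c} \<inter> space M = {\<omega> \<in> space M. X i \<omega> = c}" by auto
    ultimately show ?thesis by simp
  qed
  have "Xvec X n \<omega> = xs \<longleftrightarrow> length xs = n \<and> (\<forall>i<n. X i \<omega> = xs ! i)" for \<omega>
    unfolding Xvec_def list_eq_iff_nth_eq by auto
  then have "Xvec X n -` {xs} \<inter> space M = {\<omega> \<in> space M. length xs = n \<and> (\<forall>i<n. X i \<omega> = xs ! i)}"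
    by blast
  also have "\<dots> \<in> sets M"
    using X_sets by (cases "length xs = n") simp_all
  finally show "Xvec X n -` {xs} \<inter> space M \<in> sets M" .
qed simp

lemma iid_source_marginal:
  "iid_source \<Theta> P X \<Longrightarrow> sub_exp \<Theta> P (\<lambda>\<omega>. \<phi> (X i \<omega>)) = sub_exp \<Theta> P (\<lambda>\<omega>. \<phi> (X j \<omega>))"
  unfolding iid_source_def by blast

lemma iid_source_Suc:
  "iid_source \<Theta> P X \<Longrightarrow> sub_exp \<Theta> P (\<lambda>\<omega>. \<phi> (Xvec X (Suc n) \<omega>))
     = sub_exp \<Theta> P (\<lambda>\<omega>. sub_exp \<Theta> P (\<lambda>\<omega>'. \<phi> (Xvec X n \<omega> @ [X n \<omega>'])))"
  unfolding iid_source_def using diff_Suc_1 le_add1 plus_1_eq_Suc by metis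

locale prob_family =
  fixes M :: "'o measure" and \<Theta> :: "'t set" and P :: "'t \<Rightarrow> 'o measure"
  assumes nonempty: "\<Theta> \<noteq> {}"
    and prob_space_P: "\<And>\<theta>. \<theta> \<in> \<Theta> \<Longrightarrow> prob_space (P \<theta>)"
    and sets_P: "\<And>\<theta>. \<theta> \<in> \<Theta> \<Longrightarrow> sets (P \<theta>) = sets M"
    and space_P: "\<And>\<theta>. \<theta> \<in> \<Theta> \<Longrightarrow> space (P \<theta>) = space M"
begin

lemma integrable_bounded_measurable:
  assumes "bounded_measurable M f" "\<theta> \<in> \<Theta>"
  shows "integrable (P \<theta>) f"
proof -
  interpret prob_space "P \<theta>" using prob_space_P assms(2) .
  obtain B where "\<forall>\<omega>\<in>space M. \<bar>f \<omega>\<bar> \<le> B" "f \<in> borel_measurable M"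
    using assms(1) by (auto simp: bounded_measurable_def)
  then show ?thesis
    using measurable_cong_sets[OF sets_P[OF assms(2)] refl] space_P[OF assms(2)]
    by (intro integrable_const_bound[where B = B]) auto
qed

lemma integral_le_sub_exp:
  assumes "bounded_measurable M f" "\<theta> \<in> \<Theta>"
  shows "(\<integral>\<omega>. f \<omega> \<partial>P \<theta>) \<le> sub_exp \<Theta> P f"
proof -
  obtain B where B: "\<forall>\<omega>\<in>space M. \<bar>f \<omega>\<bar> \<le> B"
    using assms(1) by (auto simp: bounded_measurable_def)
  have "(\<integral>\<omega>. f \<omega> \<partial>P \<theta>') \<le> B" if "\<theta>' \<in> \<Theta>" for \<theta>'
  proof -
    interpret prob_space "P \<theta>'" using prob_space_P that .
    have "(\<integral>\<omega>. f \<omega> \<partial>P \<theta>') \<le> (\<integral>\<omega>. B \<partial>P \<theta>')"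
      using integrable_bounded_measurable[OF assms(1) that] B space_P[OF that]
      by (intro integral_mono) auto
    then show ?thesis by (simp add: prob_space)
  qed
  then show ?thesis
    unfolding sub_exp_def by (intro cSUP_upper assms(2) bdd_aboveI2)
qed

lemma sub_exp_mono:
  assumes "bounded_measurable M f" "bounded_measurable M g" "\<And>\<omega>. \<omega> \<in> space M \<Longrightarrow> f \<omega> \<le> g \<omega>"
  shows "sub_exp \<Theta> P f \<le> sub_exp \<Theta> P g"
  unfolding sub_exp_def
proof (rule cSUP_least[OF nonempty])
  fix \<theta> assume "\<theta> \<in> \<Theta>"
  then have "(\<integral>\<omega>. f \<omega> \<partial>P \<theta>) \<le> (\<integral>\<omega>. g \<omega> \<partial>P \<theta>)"
    using integrable_bounded_measurable[OF assms(1)] integrable_bounded_measurable[OF assms(2)]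
      assms(3) space_P by (intro integral_mono) auto
  also have "\<dots> \<le> sub_exp \<Theta> P g" using integral_le_sub_exp[OF assms(2) \<open>\<theta> \<in> \<Theta>\<close>] .
  finally show "(\<integral>\<omega>. f \<omega> \<partial>P \<theta>) \<le> (SUP \<theta>\<in>\<Theta>. \<integral>\<omega>. g \<omega> \<partial>P \<theta>)" by (simp add: sub_exp_def)
qed

lemma sub_exp_const: "sub_exp \<Theta> P (\<lambda>_. c) = c"
proof -
  have "(\<integral>\<omega>. c \<partial>P \<theta>) = c" if "\<theta> \<in> \<Theta>" for \<theta>
  proof -
    interpret prob_space "P \<theta>" using prob_space_P that .
    show ?thesis by (simp add: prob_space)
  qed
  then have "sub_exp \<Theta> P (\<lambda>_. c) = (SUP \<theta>\<in>\<Theta>. c)"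
    unfolding sub_exp_def by (intro SUP_cong) auto
  then show ?thesis using nonempty by simp
qed

lemma low_exp_eq_uminus_sub_exp: "low_exp \<Theta> P f = - sub_exp \<Theta> P (\<lambda>\<omega>. - f \<omega>)"
  by (simp add: low_exp_def sub_exp_def Inf_real_def image_image)

context
  fixes X :: "nat \<Rightarrow> 'o \<Rightarrow> 'x::finite"
  assumes X_measurable: "\<forall>i. X i \<in> measurable M (count_space UNIV)"
begin

lemma integral_fun_X0:
  assumes "\<theta> \<in> \<Theta>"
  shows "(\<integral>\<omega>. \<phi> (X 0 \<omega>) \<partial>P \<theta>) = (\<Sum>x\<in>UNIV. pdist P X \<theta> x * \<phi> x)"
proof -
  interpret prob_space "P \<theta>" using prob_space_P assms .
  define A where "A x = {\<omega> \<in> space (P \<theta>). X 0 \<omega> = x}" for x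
  have A_sets: "A x \<in> sets (P \<theta>)" for x
  proof -
    have "X 0 -` {x} \<inter> space M \<in> sets M" using X_measurable by (intro measurable_sets) auto
    moreover have "X 0 -` {x} \<inter> space M = A x" by (auto simp: A_def space_P[OF assms])
    ultimately show ?thesis using sets_P[OF assms] by simp
  qed
  have "(\<integral>\<omega>. \<phi> (X 0 \<omega>) \<partial>P \<theta>) = (\<integral>\<omega>. (\<Sum>x\<in>UNIV. \<phi> x * indicator (A x) \<omega>) \<partial>P \<theta>)"
  proof (rule Bochner_Integration.integral_cong[OF refl])
    fix \<omega> assume "\<omega> \<in> space (P \<theta>)"
    then have "(\<Sum>x\<in>UNIV. \<phi> x * indicator (A x) \<omega>) = (\<Sum>x\<in>{X 0 \<omega>}. \<phi> x * indicator (A x) \<omega>)"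
      by (intro sum.mono_neutral_right) (auto simp: A_def)
    with \<open>\<omega> \<in> space (P \<theta>)\<close> show "\<phi> (X 0 \<omega>) = (\<Sum>x\<in>UNIV. \<phi> x * indicator (A x) \<omega>)"
      by (simp add: A_def)
  qed
  also have "\<dots> = (\<Sum>x\<in>UNIV. \<integral>\<omega>. \<phi> x * indicator (A x) \<omega> \<partial>P \<theta>)"
    using A_sets by (intro Bochner_Integration.integral_sum)
      (auto intro!: integrable_mult_right integrable_real_indicator simp: emeasure_eq_measure)
  also have "\<dots> = (\<Sum>x\<in>UNIV. pdist P X \<theta> x * \<phi> x)"
    using A_sets by (simp add: pdist_def A_def mult.commute)
  finally show ?thesis .
qed

lemma pdist_nonneg: "pdist P X \<theta> x \<ge> 0"
  by (simp add: pdist_def)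

lemma pdist_sum: "\<theta> \<in> \<Theta> \<Longrightarrow> (\<Sum>x\<in>UNIV. pdist P X \<theta> x) = 1"
  using integral_fun_X0[of \<theta> "\<lambda>_. 1"] prob_space.prob_space[OF prob_space_P] by simp

lemma bounded_measurable_fun_X: "bounded_measurable M (\<lambda>\<omega>. \<phi> (X i \<omega>))"
  using X_measurable by (intro bounded_measurable_finite_valued) auto

lemma bounded_measurable_fun_Xvec: "bounded_measurable M (\<lambda>\<omega>. \<psi> (Xvec X n \<omega>))"
proof (rule bounded_measurable_finite_valued[OF measurable_Xvec[OF X_measurable]])
  have "Xvec X n ` space M \<subseteq> words n" by (auto simp: words_def)
  then show "finite (Xvec X n ` space M)" by (rule finite_subset) simp
qed

text \<open>The i.i.d. condition peels off the last coordinate one step at a time, and each inner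
  sublinear expectation of a function of \<open>X n\<close> dominates its expectation under \<open>P \<theta>\<close>.\<close>

lemma sum_word_prob_le_sub_exp:
  assumes iid: "iid_source \<Theta> P X" and "\<theta> \<in> \<Theta>"
  shows "(\<Sum>xs\<in>words n. word_prob (pdist P X \<theta>) xs * \<psi> xs) \<le> sub_exp \<Theta> P (\<lambda>\<omega>. \<psi> (Xvec X n \<omega>))"
proof (induction n arbitrary: \<psi>)
  case 0
  then show ?case by (simp add: Xvec_def sub_exp_const)
next
  case (Suc n)
  define p where "p = pdist P X \<theta>"
  have step: "(\<Sum>x\<in>UNIV. p x * \<psi> (xs @ [x])) \<le> sub_exp \<Theta> P (\<lambda>\<omega>'. \<psi> (xs @ [X n \<omega>']))" for xs
  proof -
    have "(\<Sum>x\<in>UNIV. p x * \<psi> (xs @ [x])) = (\<integral>\<omega>'. \<psi> (xs @ [X 0 \<omega>']) \<partial>P \<theta>)"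
      unfolding p_def by (rule integral_fun_X0[OF \<open>\<theta> \<in> \<Theta>\<close>, symmetric])
    also have "\<dots> \<le> sub_exp \<Theta> P (\<lambda>\<omega>'. \<psi> (xs @ [X 0 \<omega>']))"
      by (rule integral_le_sub_exp[OF bounded_measurable_fun_X \<open>\<theta> \<in> \<Theta>\<close>])
    also have "\<dots> = sub_exp \<Theta> P (\<lambda>\<omega>'. \<psi> (xs @ [X n \<omega>']))"
      using iid_source_marginal[OF iid, of "\<lambda>x. \<psi> (xs @ [x])" 0 n] by simp
    finally show ?thesis .
  qed
  have "(\<Sum>xs\<in>words (Suc n). word_prob p xs * \<psi> xs)
      = (\<Sum>xs\<in>words n. word_prob p xs * (\<Sum>x\<in>UNIV. p x * \<psi> (xs @ [x])))"
    by (simp add: sum_words_snoc sum_distrib_left mult.assoc)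
  also have "\<dots> \<le> sub_exp \<Theta> P (\<lambda>\<omega>. \<Sum>x\<in>UNIV. p x * \<psi> (Xvec X n \<omega> @ [x]))"
    unfolding p_def by (rule Suc.IH)
  also have "\<dots> \<le> sub_exp \<Theta> P (\<lambda>\<omega>. sub_exp \<Theta> P (\<lambda>\<omega>'. \<psi> (Xvec X n \<omega> @ [X n \<omega>'])))"
    using step by (intro sub_exp_mono bounded_measurable_fun_Xvec)
  also have "\<dots> = sub_exp \<Theta> P (\<lambda>\<omega>. \<psi> (Xvec X (Suc n) \<omega>))"
    by (rule iid_source_Suc[OF iid, symmetric])
  finally show ?case unfolding p_def .
qed

lemma low_exp_le_sum_word_prob:
  assumes "iid_source \<Theta> P X" and "\<theta> \<in> \<Theta>"
  shows "low_exp \<Theta> P (\<lambda>\<omega>. \<psi> (Xvec X n \<omega>)) \<le> (\<Sum>xs\<in>words n. word_prob (pdist P X \<theta>) xs * \<psi> xs)"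
  using sum_word_prob_le_sub_exp[OF assms, where n = n and \<psi> = "\<lambda>xs. - \<psi> xs"]
  by (simp add: low_exp_eq_uminus_sub_exp sum_negf)

lemma random_coding_pdist:
  assumes "\<theta> \<in> \<Theta>" "stochastic Q" "\<forall>x y. d x y \<ge> 0"
  shows "random_coding (pdist P X \<theta>) Q d"
  using assms by unfold_locales (auto simp: pdist_nonneg pdist_sum)

end

end

lemma prob_family_if_sublinear_expectation_space:
  assumes "sublinear_expectation_space M H \<Theta> P"
  shows "prob_family M \<Theta> P"
proof -
  have "\<Theta> \<noteq> {}" and "\<forall>\<theta>\<in>\<Theta>. prob_space (P \<theta>) \<and> sets (P \<theta>) = sets M \<and> space (P \<theta>) = space M"
    using assms unfolding sublinear_expectation_space_def by blast+
  then show ?thesis by (intro prob_family.intro) auto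
qed

theorem theorem14:
  fixes M :: "'o measure" and H :: "('o \<Rightarrow> real) set" and \<Theta> :: "'t set"
    and P :: "'t \<Rightarrow> 'o measure" and X :: "nat \<Rightarrow> 'o \<Rightarrow> 'x::finite"
    and d :: "'x \<Rightarrow> 'y::finite \<Rightarrow> real" and D Rs \<epsilon> :: real
  assumes "sublinear_expectation_space M H \<Theta> P"
    and "countably_dim_weakly_compact H \<Theta> P"
    and "\<forall>i. X i \<in> measurable M (count_space UNIV)"
    and "\<forall>i (\<phi>::'x \<Rightarrow> real). (\<lambda>\<omega>. \<phi> (X i \<omega>)) \<in> H"
    and "iid_source \<Theta> P X"
    and "\<forall>x y. d x y \<ge> 0"
    and "ereal Rs > rate_distortion \<Theta> (pdist P X) d D"
    and "\<epsilon> > 0"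
  shows "\<exists>n::nat. n \<ge> 1 \<and>
           (\<exists>(W::nat) (f::'x list \<Rightarrow> nat) (g::nat \<Rightarrow> 'y list).
              W \<ge> 1 \<and>
              (\<forall>xs. length xs = n \<longrightarrow> f xs < W) \<and>
              (\<forall>w<W. length (g w) = n) \<and>
              ln (real W) / real n \<le> Rs \<and>
              low_exp \<Theta> P (\<lambda>\<omega>. seq_distortion d (Xvec X n \<omega>) (g (f (Xvec X n \<omega>)))) \<le> D + \<epsilon>)"
proof -
  interpret prob_family M \<Theta> P
    using assms(1) by (rule prob_family_if_sublinear_expectation_space)
  obtain Q where "stochastic Q" and Q_distortion: "exp_dist_Q \<Theta> (pdist P X) Q d \<le> D"
    and Q_info: "mutual_info_bar \<Theta> (pdist P X) Q < Rs"
    using assms(7) by (auto simp: rate_distortion_def INF_less_iff)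
  note coding = random_coding_pdist[OF assms(3) _ \<open>stochastic Q\<close> assms(6)]
  obtain \<theta> where "\<theta> \<in> \<Theta>" using nonempty by blast
  interpret random_coding "pdist P X \<theta>" Q d by (rule coding[OF \<open>\<theta> \<in> \<Theta>\<close>])
  have "mean_distortion \<le> exp_dist_Q \<Theta> (pdist P X) Q d"
    unfolding exp_dist_Q_def mean_distortion_eq
    using random_coding.mean_distortion_eq[OF coding]
      random_coding.mean_distortion_le_max[OF coding]
    by (intro cSUP_upper \<open>\<theta> \<in> \<Theta>\<close> bdd_aboveI2) force
  moreover have "mutual_info \<le> mutual_info_bar \<Theta> (pdist P X) Q"
    unfolding mutual_info_bar_def mutual_info_eq
    using random_coding.mutual_info_eq[OF coding] random_coding.mutual_info_le_card[OF coding]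
    by (intro cSUP_upper \<open>\<theta> \<in> \<Theta>\<close> bdd_aboveI2) force
  ultimately obtain n W f g where code: "n \<ge> 1" "W \<ge> 1" "\<forall>xs. length xs = n \<longrightarrow> f xs < W"
      "\<forall>w<W. length (g w) = n" "ln (real W) / real n \<le> Rs"
    and distortion:
      "(\<Sum>xs\<in>words n. word_prob (pdist P X \<theta>) xs * seq_distortion d xs (g (f xs))) \<le> D + \<epsilon>"
    using source_coding[of D Rs \<epsilon>] Q_distortion Q_info assms(8) by auto
  have "low_exp \<Theta> P (\<lambda>\<omega>. seq_distortion d (Xvec X n \<omega>) (g (f (Xvec X n \<omega>)))) \<le> D + \<epsilon>"
    using low_exp_le_sum_word_prob[OF assms(3,5) \<open>\<theta> \<in> \<Theta>\<close>] distortion by (rule order.trans)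
  with code show ?thesis by blast
qed

end
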